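(* Let $\tau>0$ and $\lambda_0\in[0,+\infty)$ with $\tau\lambda_0\le1$. Let $G(E)=\frac{E}{(1-E)^2}$, an increasing bijection from $[0,1)$ onto $[0,+\infty)$. Define $E^\tau_0=\tau\lambda_0$ and, for $k\ge0$, $E^\tau_{k+1}\in[0,1)$ as the unique solution of $G(E^\tau_{k+1})=E^\tau_k$. Then for all $k\ge0$, \[\frac1\tau E^\tau_k\le\frac{\lambda_0}{\tau k\lambda_0(2-\tau\lambda_0)+1}.\] *)

theory Defs
  imports Complex_Main
begin

definition G :: "real \<Rightarrow> real" where
  "G E = E / (1 - E)^2"

definition Ginv :: "real \<Rightarrow> real" where
  "Ginv y = (THE E. 0 \<le> E \<and> E < 1 \<and> G E = y)"

fun Eseq :: "real \<Rightarrow> real \<Rightarrow> nat \<Rightarrow> real" where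
  "Eseq \<tau> lam0 0 = \<tau> * lam0"
| "Eseq \<tau> lam0 (Suc k) = Ginv (Eseq \<tau> lam0 k)"

end

theory Submission
  imports Defs
begin

(* Since 1/G(E) = 1/E - 2 + E, each step of the scheme satisfies
   1/E_(k+1) = 1/E_k + 2 - E_(k+1).  Moreover G(E) >= E, so the sequence is
   nonincreasing and E_(k+1) <= E_0 = tau lam0.  Summing gives
   1/E_k >= 1/(tau lam0) + k (2 - tau lam0), which is the claimed bound after
   inverting and dividing by tau. *)

lemma strict_mono_on_G: "strict_mono_on {0..<1} G"
proof (rule strict_mono_onI)
  fix x z :: real
  assume "x \<in> {0..<1}" "z \<in> {0..<1}" "x < z"
  then have x: "0 \<le> x" and z: "x < z" "z < 1" by auto
  have "(1 - z)^2 < (1 - x)^2" using x z by (intro power_strict_mono) auto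
  then have "x / (1 - x)^2 \<le> x / (1 - z)^2" using x z by (intro divide_left_mono) auto
  also have "\<dots> < z / (1 - z)^2" using x z by (intro divide_strict_right_mono) auto
  finally show "G x < G z" unfolding G_def .
qed

lemma le_G:
  assumes "0 \<le> E" "E < 1"
  shows "E \<le> G E"
proof -
  have "(1 - E)^2 \<le> 1" using assms by (intro power_le_one) auto
  then have "E / 1 \<le> E / (1 - E)^2" using assms by (intro divide_left_mono) auto
  then show ?thesis by (simp add: G_def)
qed

lemma inverse_G:
  assumes "E \<noteq> 0"
  shows "1 / G E = 1 / E - 2 + E"
  using assms by (simp add: G_def field_simps power2_eq_square)

lemma ex_G_eq:
  assumes "0 \<le> y"
  shows "\<exists>E. 0 \<le> E \<and> E < 1 \<and> G E = y"
proof -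
  define b where "b = y / (1 + y)"
  have b: "0 \<le> b" "b < 1" using assms by (auto simp: b_def)
  have "y = b / (1 - b)" using assms by (simp add: b_def field_simps)
  also have "\<dots> \<le> G b"
  proof -
    have "(1 - b)^2 \<le> 1 - b" using b by (simp add: power2_eq_square mult_le_cancel_right1)
    then show ?thesis using b by (simp add: G_def divide_left_mono)
  qed
  finally have "y \<le> G b" .
  moreover have "G 0 \<le> y" using assms by (simp add: G_def)
  moreover have "continuous_on {0..b} G" unfolding G_def using b
    by (intro continuous_intros) auto
  ultimately obtain E where "E \<in> {0..b}" "G E = y"
    using IVT'[of G 0 y b] b by auto
  then show ?thesis using b by (intro exI[of _ E]) auto
qed

lemma ex1_G_eq:
  assumes "0 \<le> y"
  shows "\<exists>!E. 0 \<le> E \<and> E < 1 \<and> G E = y"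
  using ex_G_eq[OF assms] strict_mono_on_imp_inj_on[OF strict_mono_on_G]
  by (auto simp: inj_on_def)

lemma Ginv:
  assumes "0 \<le> y"
  shows Ginv_nonneg: "0 \<le> Ginv y" and Ginv_less_one: "Ginv y < 1"
    and G_Ginv: "G (Ginv y) = y"
  using theI'[OF ex1_G_eq[OF assms]] unfolding Ginv_def by auto

lemma Ginv_le:
  assumes "0 \<le> y"
  shows "Ginv y \<le> y"
  using le_G[OF Ginv_nonneg Ginv_less_one] G_Ginv assms by metis

lemma Ginv_pos:
  assumes "0 < y"
  shows "0 < Ginv y"
  using Ginv_nonneg[of y] G_Ginv[of y] assms by (cases "Ginv y = 0") (auto simp: G_def)

lemma Eseq_nonneg: "0 \<le> \<tau> * lam0 \<Longrightarrow> 0 \<le> Eseq \<tau> lam0 k"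
  by (induction k) (auto intro: Ginv_nonneg)

lemma Eseq_pos: "0 < \<tau> * lam0 \<Longrightarrow> 0 < Eseq \<tau> lam0 k"
  by (induction k) (auto intro: Ginv_pos)

lemma Eseq_le_initial: "0 \<le> \<tau> * lam0 \<Longrightarrow> Eseq \<tau> lam0 k \<le> \<tau> * lam0"
  by (induction k) (auto intro: order_trans[OF Ginv_le] Eseq_nonneg)

lemma inverse_Eseq_ge:
  assumes "0 < \<tau> * lam0"
  shows "1 / (\<tau> * lam0) + real k * (2 - \<tau> * lam0) \<le> 1 / Eseq \<tau> lam0 k"
proof (induction k)
  case 0
  then show ?case by simp
next
  case (Suc k)
  let ?E = "Eseq \<tau> lam0"
  have "1 / ?E (Suc k) = 1 / G (?E (Suc k)) + 2 - ?E (Suc k)"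
    using inverse_G[of "?E (Suc k)"] Eseq_pos[OF assms, of "Suc k"] by simp
  also have "\<dots> = 1 / ?E k + 2 - ?E (Suc k)"
    using G_Ginv Eseq_pos[OF assms, of k] by simp
  finally show ?case
    using Suc.IH Eseq_le_initial[of \<tau> lam0 "Suc k"] assms by (simp add: algebra_simps)
qed

lemma Eseq_le:
  assumes "0 < \<tau> * lam0" "\<tau> * lam0 \<le> 2"
  shows "Eseq \<tau> lam0 k \<le> \<tau> * lam0 / (real k * (\<tau> * lam0) * (2 - \<tau> * lam0) + 1)"
proof -
  define a where "a = \<tau> * lam0"
  have a: "0 < a" "a \<le> 2" using assms by (auto simp: a_def)
  have "0 < 1 / a + real k * (2 - a)" using a by (simp add: add_pos_nonneg)
  then have "Eseq \<tau> lam0 k \<le> 1 / (1 / a + real k * (2 - a))"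
    using inverse_Eseq_ge[OF assms(1), of k] Eseq_pos[OF assms(1), of k]
    by (simp add: a_def le_divide_eq divide_le_eq mult.commute)
  also have "\<dots> = a / (real k * a * (2 - a) + 1)" using a by (simp add: field_simps)
  finally show ?thesis by (simp add: a_def)
qed

theorem mainTheorem14:
  fixes \<tau> lam0 :: real and k :: nat
  assumes "\<tau> > 0" and "lam0 \<ge> 0" and "\<tau> * lam0 \<le> 1"
  shows "Eseq \<tau> lam0 k / \<tau> \<le> lam0 / (\<tau> * real k * lam0 * (2 - \<tau> * lam0) + 1)"
proof (cases "lam0 = 0")
  case True
  then have "Eseq \<tau> lam0 k = 0"
    using Eseq_nonneg[of \<tau> lam0 k] Eseq_le_initial[of \<tau> lam0 k] by simp
  then show ?thesis using True by simp
next
  case False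
  then have "0 < \<tau> * lam0" using assms by simp
  then have "Eseq \<tau> lam0 k / \<tau> \<le> \<tau> * lam0 / (real k * (\<tau> * lam0) * (2 - \<tau> * lam0) + 1) / \<tau>"
    using Eseq_le assms by (intro divide_right_mono) auto
  also have "\<dots> = lam0 / (\<tau> * real k * lam0 * (2 - \<tau> * lam0) + 1)"
    using assms(1) by (simp add: mult.assoc mult.left_commute)
  finally show ?thesis .
qed

end
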